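(* Let $M$ be a $4$-dimensional Riemannian manifold with metric $g$ and affinor structure $q$ (a $(1,1)$-tensor field) whose components in local coordinates $(x^1,x^2,x^3,x^4)$ are $$g_{ij}=\begin{pmatrix} A & B & C & B\\ B & A & B & C\\ C & B & A & B\\ B & C & B & A\end{pmatrix},\qquad q_i^{\ j}=\begin{pmatrix} 0&1&0&0\\0&0&1&0\\0&0&0&1\\1&0&0&0\end{pmatrix},$$ where $A,B,C$ are smooth functions with $0<B<C<A$. Then for every point $p\in M$ there exists an orthonormal $q$-base in $T_pM$, i.e. a vector $x\in T_pM$ such that $\{x,qx,q^2x,q^3x\}$ is a basis of $T_pM$ which is orthonormal with respect to $g$.
   Context: A $q$-base of $T_pM$ is a basis of $T_pM$ of the form $\{x,qx,q^2x,q^3x\}$ for some $x\in T_pM$. The structure satisfies $q^4=\mathrm{id}$ and $g(qx,qy)=g(x,y)$ for all vector fields $x,y$; the metric $g$ is positive definite under the stated inequalities. *)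

theory Defs
  imports "HOL-Analysis.Analysis"
begin

text \<open>Pointwise (at a point p) data: T_pM is identified with real^4 via the coordinate
  basis d/dx^1,...,d/dx^4 (indices 1,2,3,4 of type 4 correspond to coordinates 1..4).\<close>

definition gmat :: "real \<Rightarrow> real \<Rightarrow> real \<Rightarrow> real^4^4" where
  "gmat A B C = vector [vector [A, B, C, B], vector [B, A, B, C],
                        vector [C, B, A, B], vector [B, C, B, A]]"

definition qmat :: "real^4^4" where
  "qmat = vector [vector [0, 1, 0, 0], vector [0, 0, 1, 0],
                  vector [0, 0, 0, 1], vector [1, 0, 0, 0]]"

definition gform :: "real \<Rightarrow> real \<Rightarrow> real \<Rightarrow> real^4 \<Rightarrow> real^4 \<Rightarrow> real" where
  "gform A B C x y = (\<Sum>i\<in>UNIV. \<Sum>j\<in>UNIV. (gmat A B C $ i $ j) * (x $ i) * (y $ j))"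

definition qop :: "real^4 \<Rightarrow> real^4" where
  "qop x = (\<chi> j. \<Sum>i\<in>UNIV. (x $ i) * (qmat $ i $ j))"

end

theory Submission imports Defs begin

text \<open>The metric is a circulant matrix and q is the cyclic shift, so q is a g-isometry with
  q^4 = id and g(q^i x, q^j x) only depends on j - i mod 4. Hence it suffices to
  find x with g(x,x) = 1 and g(x,qx) = g(x,q^2 x) = 0, which is possible by decomposing x
  along the eigenvectors of g.\<close>

lemma orthonormal_family_inj_on:
  fixes b :: "'a \<Rightarrow> 'a \<Rightarrow> real"
  assumes "\<forall>i<n. \<forall>j<n. b (f i) (f j) = (if i = j then 1 else 0)"
  shows "inj_on f {0..<n}"
  by (rule inj_onI) (metis assms atLeastLessThan_iff zero_neq_one)

lemma orthonormal_family_independent: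
  fixes f :: "nat \<Rightarrow> 'a::real_vector" and b :: "'a \<Rightarrow> 'a \<Rightarrow> real"
  assumes lin: "\<And>y. linear (\<lambda>x. b x y)"
    and orthonormal: "\<forall>i<n. \<forall>j<n. b (f i) (f j) = (if i = j then 1 else 0)"
  shows "independent (f ` {0..<n})"
proof
  let ?S = "f ` {0..<n}"
  have inj: "inj_on f {0..<n}"
    using orthonormal by (rule orthonormal_family_inj_on)
  assume "dependent ?S"
  then obtain u where u: "\<exists>v\<in>?S. u v \<noteq> 0" "(\<Sum>v\<in>?S. u v *\<^sub>R v) = 0"
    using dependent_finite[of ?S] by auto
  then obtain j where j: "j < n" "u (f j) \<noteq> 0" by auto
  have "0 = b (\<Sum>v\<in>?S. u v *\<^sub>R v) (f j)"
    using u(2) linear_0[OF lin] by simp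
  also have "\<dots> = (\<Sum>v\<in>?S. u v * b v (f j))"
    by (simp add: linear_sum[OF lin] linear_scale[OF lin])
  also have "\<dots> = (\<Sum>i=0..<n. u (f i) * b (f i) (f j))"
    using sum.reindex[OF inj, of "\<lambda>v. u v * b v (f j)"] by simp
  also have "\<dots> = (\<Sum>i=0..<n. if i = j then u (f j) else 0)"
    using j orthonormal by (intro sum.cong) auto
  also have "\<dots> = u (f j)"
    using j by simp
  finally show False using j by simp
qed

lemma orthonormal_family_span_UNIV:
  fixes f :: "nat \<Rightarrow> 'a::euclidean_space" and b :: "'a \<Rightarrow> 'a \<Rightarrow> real"
  assumes "\<And>y. linear (\<lambda>x. b x y)"
    and "\<forall>i<n. \<forall>j<n. b (f i) (f j) = (if i = j then 1 else 0)"
    and "n = DIM('a)"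
  shows "span (f ` {0..<n}) = UNIV"
proof -
  have "dim (f ` {0..<n}) = card (f ` {0..<n})"
    using orthonormal_family_independent[OF assms(1,2)] by (rule dim_eq_card_independent)
  also have "\<dots> = DIM('a)"
    using card_image[OF orthonormal_family_inj_on[of n b f, OF assms(2)]] assms(3) by simp
  finally show ?thesis by (simp add: dim_eq_full)
qed

lemma orthonormal_orbit_of_period_4:
  fixes q :: "'a \<Rightarrow> 'a" and b :: "'a \<Rightarrow> 'a \<Rightarrow> real"
  assumes commute: "\<And>y z. b y z = b z y"
    and invariant: "\<And>y z. b (q y) (q z) = b y z"
    and period: "(q ^^ 4) x = x"
    and "b x x = 1" "b x (q x) = 0" "b x ((q ^^ 2) x) = 0"
  shows "\<forall>i<4. \<forall>j<4. b ((q ^^ i) x) ((q ^^ j) x) = (if i = j then 1 else 0)"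
proof -
  have shift: "b ((q ^^ i) y) ((q ^^ i) z) = b y z" for i y z
    by (induction i) (simp_all add: invariant)
  have "b x ((q ^^ 3) x) = b (q x) ((q ^^ 4) x)"
    using shift[of 1 x "(q ^^ 3) x"] by (simp add: numeral_eq_Suc)
  also have "\<dots> = 0"
    using period commute assms(5) by simp
  finally have "b x ((q ^^ 3) x) = 0" .
  have orbit: "b x ((q ^^ k) x) = (if k = 0 then 1 else 0)" if "k < 4" for k
  proof -
    have "k = 0 \<or> k = 1 \<or> k = 2 \<or> k = 3"
      using that by auto
    then show ?thesis
      using assms(4-6) \<open>b x ((q ^^ 3) x) = 0\<close> by auto
  qed
  have "b ((q ^^ i) x) ((q ^^ j) x) = (if i = j then 1 else 0)" if "i \<le> j" "j < 4" for i j
  proof -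
    have "(q ^^ j) x = (q ^^ i) ((q ^^ (j - i)) x)"
      using \<open>i \<le> j\<close> by (metis funpow_add le_add_diff_inverse comp_apply)
    then show ?thesis
      using that shift orbit[of "j - i"] by auto
  qed
  then show ?thesis
    by (metis commute nat_le_linear)
qed

lemma qop_vector: "qop (vector [a, b, c, d]) = vector [d, a, b, c]"
  unfolding qop_def qmat_def by (simp add: vec_eq_iff forall_4 sum_4 vector_def)

lemma vector_4_components: "vector [x $ 1, x $ 2, x $ 3, x $ 4] = (x :: 'a::zero^4)"
  by (simp add: vec_eq_iff forall_4 vector_def)

lemma qop_funpow_4: "(qop ^^ 4) x = x"
proof -
  have "(qop ^^ 4) (vector [x $ 1, x $ 2, x $ 3, x $ 4]) = vector [x $ 1, x $ 2, x $ 3, x $ 4]"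
    by (simp add: qop_vector numeral_eq_Suc)
  then show ?thesis by (simp only: vector_4_components)
qed

lemma gform_vector:
  "gform A B C (vector [a, b, c, d]) (vector [a', b', c', d']) =
     a * (A * a' + B * b' + C * c' + B * d') + b * (B * a' + A * b' + B * c' + C * d')
   + c * (C * a' + B * b' + A * c' + B * d') + d * (B * a' + C * b' + B * c' + A * d')"
  unfolding gform_def gmat_def by (simp add: sum_4 vector_def algebra_simps)

lemma gform_commute: "gform A B C x y = gform A B C y x"
proof -
  have "gform A B C (vector [x $ 1, x $ 2, x $ 3, x $ 4]) (vector [y $ 1, y $ 2, y $ 3, y $ 4])
      = gform A B C (vector [y $ 1, y $ 2, y $ 3, y $ 4]) (vector [x $ 1, x $ 2, x $ 3, x $ 4])"
    unfolding gform_vector by algebra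
  then show ?thesis by (simp only: vector_4_components)
qed

lemma gform_qop_qop: "gform A B C (qop x) (qop y) = gform A B C x y"
proof -
  have "gform A B C (qop (vector [x $ 1, x $ 2, x $ 3, x $ 4])) (qop (vector [y $ 1, y $ 2, y $ 3, y $ 4]))
      = gform A B C (vector [x $ 1, x $ 2, x $ 3, x $ 4]) (vector [y $ 1, y $ 2, y $ 3, y $ 4])"
    unfolding qop_vector gform_vector by algebra
  then show ?thesis by (simp only: vector_4_components)
qed

lemma linear_gform_left: "linear (\<lambda>x. gform A B C x y)"
  unfolding gform_def by (rule linearI) (simp_all add: algebra_simps sum.distrib sum_distrib_left)

text \<open>The witness is x = u e_0 + v e_2 + w e_1 with e_0 = (1,1,1,1), e_2 = (1,-1,1,-1),
  e_1 = (1,0,-1,0): g-orthogonal eigenvectors of g on which q acts as 1, as -1 and as a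
  quarter turn (of the plane of e_1 and q e_1). The normalisation makes
  g(x, q^k x) = 1/4 + (-1)^k/4 + cos(k\<pi>/2)/2.\<close>
lemma gform_qop_orbit_witness:
  fixes u v w :: real
  assumes "16 * (A + 2 * B + C) * u^2 = 1" "16 * (A - 2 * B + C) * v^2 = 1"
    and "4 * (A - C) * w^2 = 1"
  defines "x \<equiv> vector [u + v + w, u - v, u + v - w, u - v]"
  shows "gform A B C x x = 1" "gform A B C x (qop x) = 0" "gform A B C x ((qop ^^ 2) x) = 0"
  unfolding x_def using assms(1-3) by (simp_all add: gform_vector qop_vector numeral_eq_Suc; algebra)+

lemma ex_inverse_square: "0 < a \<Longrightarrow> \<exists>u. a * u^2 = (1::real)"
  by (rule exI[of _ "1 / sqrt a"]) (simp add: power_divide)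

lemma orthonormal_q_base_exists:
  fixes A B C :: real
  assumes "0 < B" "B < C" "C < A"
  shows "\<exists>x :: real^4.
           inj_on (\<lambda>k. (qop ^^ k) x) {0..<4} \<and>
           independent ((\<lambda>k. (qop ^^ k) x) ` {0..<4}) \<and>
           span ((\<lambda>k. (qop ^^ k) x) ` {0..<4}) = UNIV \<and>
           (\<forall>i<4. \<forall>j<4. gform A B C ((qop ^^ i) x) ((qop ^^ j) x) = (if i = j then 1 else 0))"
proof -
  have "0 < 16 * (A + 2 * B + C)" "0 < 16 * (A - 2 * B + C)" "0 < 4 * (A - C)"
    using assms by simp_all
  then obtain u v w where
    "16 * (A + 2 * B + C) * u^2 = 1" "16 * (A - 2 * B + C) * v^2 = 1" "4 * (A - C) * w^2 = 1"
    using ex_inverse_square by meson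
  note witness = gform_qop_orbit_witness[OF this]
  define x :: "real^4" where "x = vector [u + v + w, u - v, u + v - w, u - v]"
  have orthonormal:
    "\<forall>i<4. \<forall>j<4. gform A B C ((qop ^^ i) x) ((qop ^^ j) x) = (if i = j then 1 else 0)"
    using orthonormal_orbit_of_period_4[OF gform_commute gform_qop_qop qop_funpow_4 witness]
    by (simp add: x_def)
  then show ?thesis
    by (intro exI[of _ x] conjI orthonormal_family_inj_on orthonormal_family_independent
        orthonormal_family_span_UNIV) (simp_all add: linear_gform_left)
qed

theorem theorem2p2:
  fixes A B C :: "'m \<Rightarrow> real"
  assumes "\<forall>p. 0 < B p \<and> B p < C p \<and> C p < A p"
  shows "\<forall>p. \<exists>x :: real^4.
           inj_on (\<lambda>k. (qop ^^ k) x) {0..<4} \<and>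
           independent ((\<lambda>k. (qop ^^ k) x) ` {0..<4}) \<and>
           span ((\<lambda>k. (qop ^^ k) x) ` {0..<4}) = UNIV \<and>
           (\<forall>i<4. \<forall>j<4. gform (A p) (B p) (C p) ((qop ^^ i) x) ((qop ^^ j) x)
                          = (if i = j then 1 else 0))"
  using assms orthonormal_q_base_exists by blast

end
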